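(* Let $\Delta=\{\{1,3\},\{1,5\},\{3,5\}\}\in\mathcal{T}_6$. Then $\chi(\mathrm{KG}(\mathcal{T}_6\setminus\{\Delta\}))=4$.
   Context: Label the vertices of a convex hexagon by $1,\dots,6$ in cyclic order; $\mathrm{Diag}_6 = \{\{i,j\} \subseteq [6]: i-j\not\equiv \pm1 \pmod 6\}$; a triangulation is identified with its set of (three) diagonals, and $\mathcal{T}_6$ is the set of triangulations. For a set system $\mathcal{F}$, $\mathrm{KG}(\mathcal{F})$ is the graph on $\mathcal{F}$ with $F,F'$ adjacent iff $F\cap F'=\emptyset$. *)

theory Defs
  imports Main
begin

text \<open>Vertices of the convex hexagon are 1..6 in cyclic order.\<close>

definition Diag6 :: "nat set set" where
  "Diag6 = {{i, j} | i j. i \<in> {1..6} \<and> j \<in> {1..6} \<and> i \<noteq> j \<and>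
            (int i - int j) mod 6 \<noteq> 1 \<and> (int i - int j) mod 6 \<noteq> 5}"

text \<open>Two diagonals cross iff their endpoints interleave in the cyclic order.\<close>
definition crosses :: "nat set \<Rightarrow> nat set \<Rightarrow> bool" where
  "crosses e f \<longleftrightarrow> (\<exists>a b c d. ((e = {a, b} \<and> f = {c, d}) \<or> (e = {c, d} \<and> f = {a, b}))
                         \<and> a < c \<and> c < b \<and> b < d)"

definition noncrossing :: "nat set set \<Rightarrow> bool" where
  "noncrossing T \<longleftrightarrow> (\<forall>e\<in>T. \<forall>f\<in>T. \<not> crosses e f)"

text \<open>A triangulation is a maximal set of pairwise non-crossing diagonals.\<close>
definition T6 :: "nat set set set" where
  "T6 = {T. T \<subseteq> Diag6 \<and> noncrossing T \<and>
            (\<forall>d\<in>Diag6 - T. \<not> noncrossing (insert d T))}"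

definition kneser_colouring :: "'a set set \<Rightarrow> nat \<Rightarrow> ('a set \<Rightarrow> nat) \<Rightarrow> bool" where
  "kneser_colouring F k c \<longleftrightarrow> (\<forall>x\<in>F. c x < k) \<and>
      (\<forall>x\<in>F. \<forall>y\<in>F. x \<noteq> y \<and> x \<inter> y = {} \<longrightarrow> c x \<noteq> c y)"

definition chi_KG :: "'a set set \<Rightarrow> nat" where
  "chi_KG F = (LEAST k. \<exists>c. kneser_colouring F k c)"

end

theory Submission
  imports Defs
begin

text \<open>Every triangulation contains one of the diagonals 13, 24, 35, 46: a triangulation avoiding all
  four must, by maximality, contain a diagonal crossing 24 and one crossing 35, which can only be 36
  and 14, and these cross each other. Colouring a triangulation by the first of these four diagonals
  it contains gives a proper 4-colouring, since equally coloured triangulations share a diagonal.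

  For the lower bound take the six fans, the triangle 24-26-46 and the three zigzags
  13-14-46, 15-24-25, 26-35-36. The zigzags are pairwise disjoint, so in a 3-colouring they use all
  three colours, and each of the three possible colours of the triangle propagates through the
  cycle of fans to a fan that sees all three colours.\<close>

lemma kneser_colouring_less:
  "kneser_colouring F k c \<Longrightarrow> x \<in> F \<Longrightarrow> c x < k"
  unfolding kneser_colouring_def by blast

lemma kneser_colouring_disjoint:
  "kneser_colouring F k c \<Longrightarrow> x \<in> F \<Longrightarrow> y \<in> F \<Longrightarrow> x \<noteq> y \<Longrightarrow> x \<inter> y = {} \<Longrightarrow> c x \<noteq> c y"
  unfolding kneser_colouring_def by blast

lemma kneser_colouring_subset:
  "kneser_colouring F k c \<Longrightarrow> G \<subseteq> F \<Longrightarrow> kneser_colouring G k c"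
  unfolding kneser_colouring_def by blast

lemma kneser_colouring_mono:
  "kneser_colouring F j c \<Longrightarrow> j \<le> k \<Longrightarrow> kneser_colouring F k c"
  unfolding kneser_colouring_def by fastforce

lemma chi_KG_eqI:
  assumes "kneser_colouring F k c" and "\<And>c. \<not> kneser_colouring F (k - 1) c"
  shows "chi_KG F = k"
  unfolding chi_KG_def
proof (rule Least_equality)
  show "\<exists>c. kneser_colouring F k c" using assms(1) by blast
next
  fix j assume "\<exists>c. kneser_colouring F j c"
  then obtain c' where c': "kneser_colouring F j c'" ..
  show "k \<le> j"
  proof (rule ccontr)
    assume "\<not> k \<le> j"
    then have "kneser_colouring F (k - 1) c'" using c' by (simp add: kneser_colouring_mono)
    with assms(2) show False by blast
  qed
qed

lemma kneser_colouring_by_stars: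
  assumes "\<forall>x\<in>F. \<exists>p\<in>set ps. p \<in> x"
  shows "kneser_colouring F (length ps) (\<lambda>x. LEAST i. ps ! i \<in> x)"
  unfolding kneser_colouring_def
proof (intro conjI ballI impI)
  fix x assume "x \<in> F"
  with assms obtain i where "i < length ps" "ps ! i \<in> x" by (metis in_set_conv_nth)
  then show "(LEAST i. ps ! i \<in> x) < length ps" using Least_le[of "\<lambda>i. ps ! i \<in> x" i] by linarith
next
  fix x y assume "x \<in> F" "y \<in> F" "x \<noteq> y \<and> x \<inter> y = {}"
  have "ps ! (LEAST i. ps ! i \<in> z) \<in> z" if "z \<in> F" for z
    using assms that LeastI_ex[of "\<lambda>i. ps ! i \<in> z"] by (metis in_set_conv_nth)
  then have "ps ! (LEAST i. ps ! i \<in> x) \<in> x" "ps ! (LEAST i. ps ! i \<in> y) \<in> y"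
    using \<open>x \<in> F\<close> \<open>y \<in> F\<close> by blast+
  then show "(LEAST i. ps ! i \<in> x) \<noteq> (LEAST i. ps ! i \<in> y)"
    using \<open>x \<noteq> y \<and> x \<inter> y = {}\<close> by auto
qed

lemma less_3_distinct_cases:
  fixes x a b d :: nat
  assumes "x < 3" "a < 3" "b < 3" "d < 3" "a \<noteq> b" "b \<noteq> d" "a \<noteq> d"
  shows "x = a \<or> x = b \<or> x = d"
  using assms by linarith

lemma Diag6_eq: "Diag6 = {{1,3},{1,4},{1,5},{2,4},{2,5},{2,6},{3,5},{3,6},{4,6}}"
proof
  show "Diag6 \<subseteq> {{1,3},{1,4},{1,5},{2,4},{2,5},{2,6},{3,5},{3,6},{4,6}}"
  proof
    fix x assume "x \<in> Diag6"
    then obtain i j where x: "x = {i,j}" and ij: "i \<in> {1..6}" "j \<in> {1..6}" "i \<noteq> j"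
      "(int i - int j) mod 6 \<noteq> 1" "(int i - int j) mod 6 \<noteq> 5" unfolding Diag6_def by blast
    from ij(1) have "i = 1 \<or> i = 2 \<or> i = 3 \<or> i = 4 \<or> i = 5 \<or> i = 6" by auto
    moreover from ij(2) have "j = 1 \<or> j = 2 \<or> j = 3 \<or> j = 4 \<or> j = 5 \<or> j = 6" by auto
    ultimately show "x \<in> {{1,3},{1,4},{1,5},{2,4},{2,5},{2,6},{3,5},{3,6},{4,6}}"
      using ij x by (elim disjE) (simp_all add: insert_commute)
  qed
next
  show "{{1,3},{1,4},{1,5},{2,4},{2,5},{2,6},{3,5},{3,6},{4,6}} \<subseteq> Diag6"
    unfolding Diag6_def by (simp, intro conjI; (rule exI[of _ "{_,_}"])?; force)
qed

lemma crosses_doubleton: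
  fixes a b c d :: nat
  assumes "a < b" "c < d"
  shows "crosses {a,b} {c,d} \<longleftrightarrow> (a < c \<and> c < b \<and> b < d) \<or> (c < a \<and> a < d \<and> d < b)"
  using assms unfolding crosses_def doubleton_eq_iff by auto

lemma T6_subset_Diag6: "T \<in> T6 \<Longrightarrow> T \<subseteq> Diag6"
  unfolding T6_def by blast

lemma T6_not_crosses: "T \<in> T6 \<Longrightarrow> e \<in> T \<Longrightarrow> f \<in> T \<Longrightarrow> \<not> crosses e f"
  unfolding T6_def noncrossing_def by blast

lemma T6_missing_diagonal_crossed:
  assumes "T \<in> T6" "d \<in> Diag6" "d \<notin> T"
  obtains e where "e \<in> T" "crosses d e \<or> crosses e d"
proof -
  from assms have "\<not> noncrossing (insert d T)" unfolding T6_def by blast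
  moreover have "\<not> crosses d d" unfolding crosses_def by auto
  ultimately show ?thesis
    using that T6_not_crosses[OF assms(1)] unfolding noncrossing_def by blast
qed

lemma T6_contains_13_24_35_or_46:
  assumes T: "T \<in> T6"
  shows "{1,3} \<in> T \<or> {2,4} \<in> T \<or> {3,5} \<in> T \<or> {4,6} \<in> T"
proof (rule ccontr)
  assume "\<not> ?thesis"
  then have avoid: "{1,3} \<notin> T" "{2,4} \<notin> T" "{3,5} \<notin> T" "{4,6} \<notin> T" by auto
  have diag: "T \<subseteq> {{1,3},{1,4},{1,5},{2,4},{2,5},{2,6},{3,5},{3,6},{4,6}}"
    using T6_subset_Diag6[OF T] by (simp only: Diag6_eq)
  have "{2,4} \<in> Diag6" "{3,5} \<in> Diag6" by (simp_all add: Diag6_eq)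
  obtain e where e: "e \<in> T" "crosses {2,4} e \<or> crosses e {2,4}"
    using T6_missing_diagonal_crossed[OF T \<open>{2,4} \<in> Diag6\<close> avoid(2)] .
  have "e \<in> {{1,3},{1,4},{1,5},{2,4},{2,5},{2,6},{3,5},{3,6},{4,6}}" using diag e(1) by (rule subsetD)
  then have "e = {3,6}" using e avoid
    by (simp only: insert_iff empty_iff) (elim disjE; simp add: crosses_doubleton)
  obtain f where f: "f \<in> T" "crosses {3,5} f \<or> crosses f {3,5}"
    using T6_missing_diagonal_crossed[OF T \<open>{3,5} \<in> Diag6\<close> avoid(3)] .
  have "f \<in> {{1,3},{1,4},{1,5},{2,4},{2,5},{2,6},{3,5},{3,6},{4,6}}" using diag f(1) by (rule subsetD)
  then have "f = {1,4}" using f avoid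
    by (simp only: insert_iff empty_iff) (elim disjE; simp add: crosses_doubleton)
  have "crosses {1,4} {3,6}" by (simp add: crosses_doubleton)
  then show False using T6_not_crosses[OF T] e(1) f(1) \<open>e = {3,6}\<close> \<open>f = {1,4}\<close> by blast
qed

lemma T6_memI:
  assumes "T \<subseteq> Diag6" "\<forall>e\<in>T. \<forall>f\<in>T. \<not> crosses e f"
    and "\<forall>d\<in>Diag6. d \<notin> T \<longrightarrow> (\<exists>e\<in>T. crosses d e \<or> crosses e d)"
  shows "T \<in> T6"
  using assms unfolding T6_def noncrossing_def by blast

lemma triangulations_in_T6:
  "{{{1,3},{1,5},{3,5}}, {{1,3},{1,4},{1,5}}, {{2,4},{2,5},{2,6}}, {{1,3},{3,5},{3,6}}, {{1,4},{2,4},{4,6}},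
    {{1,5},{2,5},{3,5}}, {{2,6},{3,6},{4,6}}, {{1,3},{1,4},{4,6}}, {{1,5},{2,4},{2,5}},
    {{2,6},{3,5},{3,6}}, {{2,4},{2,6},{4,6}}} \<subseteq> T6"
  unfolding insert_subset
  by (intro conjI empty_subsetI T6_memI; simp add: Diag6_eq crosses_doubleton doubleton_eq_iff)

lemma kneser_fans_zigzags_not_3_colourable:
  fixes c :: "nat set set \<Rightarrow> nat"
  shows "\<not> kneser_colouring {{{1,3},{1,4},{1,5}}, {{2,4},{2,5},{2,6}}, {{1,3},{3,5},{3,6}},
     {{1,4},{2,4},{4,6}}, {{1,5},{2,5},{3,5}}, {{2,6},{3,6},{4,6}},
     {{1,3},{1,4},{4,6}}, {{1,5},{2,4},{2,5}}, {{2,6},{3,5},{3,6}}, {{2,4},{2,6},{4,6}}} 3 c"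
proof
  define F1 F2 F3 F4 F5 F6 :: "nat set set" where
    "F1 = {{1,3},{1,4},{1,5}}" and "F2 = {{2,4},{2,5},{2,6}}" and "F3 = {{1,3},{3,5},{3,6}}" and
    "F4 = {{1,4},{2,4},{4,6}}" and "F5 = {{1,5},{2,5},{3,5}}" and "F6 = {{2,6},{3,6},{4,6}}"
  define Z1 Z2 Z3 D :: "nat set set" where
    "Z1 = {{1,3},{1,4},{4,6}}" and "Z2 = {{1,5},{2,4},{2,5}}" and "Z3 = {{2,6},{3,5},{3,6}}" and
    "D = {{2,4},{2,6},{4,6}}"
  note defs = F1_def F2_def F3_def F4_def F5_def F6_def Z1_def Z2_def Z3_def D_def
  let ?W = "{F1, F2, F3, F4, F5, F6, Z1, Z2, Z3, D}"
  assume "kneser_colouring {{{1,3},{1,4},{1,5}}, {{2,4},{2,5},{2,6}}, {{1,3},{3,5},{3,6}},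
     {{1,4},{2,4},{4,6}}, {{1,5},{2,5},{3,5}}, {{2,6},{3,6},{4,6}},
     {{1,3},{1,4},{4,6}}, {{1,5},{2,4},{2,5}}, {{2,6},{3,5},{3,6}}, {{2,4},{2,6},{4,6}}} 3 c"
  then have c: "kneser_colouring ?W 3 c" by (simp only: defs)
  have edge: "c x \<noteq> c y" if "x \<in> ?W" "y \<in> ?W" "x \<inter> y = {}" for x y
  proof -
    have "x \<noteq> {}" using \<open>x \<in> ?W\<close> by (auto simp: defs)
    with \<open>x \<inter> y = {}\<close> have "x \<noteq> y" by blast
    with c that show ?thesis using kneser_colouring_disjoint by metis
  qed
  have edges: "c Z1 \<noteq> c Z2" "c Z2 \<noteq> c Z3" "c Z1 \<noteq> c Z3"
    "c D \<noteq> c F1" "c D \<noteq> c F3" "c D \<noteq> c F5"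
    "c F1 \<noteq> c Z3" "c F4 \<noteq> c Z3" "c F3 \<noteq> c Z2" "c F6 \<noteq> c Z2" "c F5 \<noteq> c Z1" "c F2 \<noteq> c Z1"
    "c F1 \<noteq> c F2" "c F2 \<noteq> c F3" "c F3 \<noteq> c F4" "c F4 \<noteq> c F5" "c F5 \<noteq> c F6" "c F6 \<noteq> c F1"
    by (rule edge; simp add: defs doubleton_eq_iff)+
  have colour: "c x = c Z1 \<or> c x = c Z2 \<or> c x = c Z3" if "x \<in> ?W" for x
  proof (rule less_3_distinct_cases)
    show "c x < 3" "c Z1 < 3" "c Z2 < 3" "c Z3 < 3"
      using kneser_colouring_less[OF c] that by simp_all
  qed (fact edges)+
  consider "c D = c Z1" | "c D = c Z2" | "c D = c Z3" using colour[of D] by auto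
  then show False
  proof cases
    case 1
    then have "c F1 = c Z2" "c F3 = c Z3" using colour[of F1] colour[of F3] edges by auto
    then show False using colour[of F2] edges by auto
  next
    case 2
    then have "c F1 = c Z1" "c F5 = c Z3" using colour[of F1] colour[of F5] edges by auto
    then show False using colour[of F6] edges by auto
  next
    case 3
    then have "c F3 = c Z1" using colour[of F3] edges by auto
    then have "c F4 = c Z2" using colour[of F4] edges by auto
    then show False using 3 colour[of F5] edges by auto
  qed
qed

lemma T6_minus_triangle_not_3_colourable:
  "\<not> kneser_colouring (T6 - {{{1,3},{1,5},{3,5}}}) 3 c"
proof
  let ?W = "{{{1,3},{1,4},{1,5}}, {{2,4},{2,5},{2,6}}, {{1,3},{3,5},{3,6}},
     {{1,4},{2,4},{4,6}}, {{1,5},{2,5},{3,5}}, {{2,6},{3,6},{4,6}},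
     {{1,3},{1,4},{4,6}}, {{1,5},{2,4},{2,5}}, {{2,6},{3,5},{3,6}}, {{2,4},{2,6},{4,6}}} :: nat set set set"
  have "{{1,3},{1,5},{3,5}} \<notin> ?W"
  proof
    have "{1,3} \<in> {{1,3},{1,5},{3,5}} \<and> {1,5} \<in> {{1,3},{1,5},{3,5}} \<and> {3,5} \<in> {{1,3},{1,5},{3,5}}"
      by simp
    moreover assume "{{1,3},{1,5},{3,5}} \<in> ?W"
    ultimately have "\<exists>x\<in>?W. {1,3} \<in> x \<and> {1,5} \<in> x \<and> {3,5} \<in> x" by (rule bexI)
    then show False by (simp add: doubleton_eq_iff)
  qed
  moreover have "?W \<subseteq> T6" using triangulations_in_T6 by (simp only: insert_subset)
  ultimately have "?W \<subseteq> T6 - {{{1,3},{1,5},{3,5}}}"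
    by (simp only: subset_Diff_insert Diff_empty simp_thms)
  moreover assume "kneser_colouring (T6 - {{{1,3},{1,5},{3,5}}}) 3 c"
  ultimately have "kneser_colouring ?W 3 c" by (rule kneser_colouring_subset[rotated])
  with kneser_fans_zigzags_not_3_colourable show False by (rule notE)
qed

theorem proposition3p6:
  assumes "\<Delta> = {{1, 3}, {1, 5}, {3, 5}}"
  shows "\<Delta> \<in> T6 \<and> chi_KG (T6 - {\<Delta>}) = 4"
proof
  show "\<Delta> \<in> T6" unfolding assms using triangulations_in_T6 by (rule subsetD) (rule insertI1)
  have stars: "\<forall>T\<in>T6 - {\<Delta>}. \<exists>d\<in>set [{1,3}, {2,4}, {3,5}, {4,6}]. d \<in> T"
    using T6_contains_13_24_35_or_46 by simp
  have "kneser_colouring (T6 - {\<Delta>}) 4 (\<lambda>T. LEAST i. [{1,3}, {2,4}, {3,5}, {4,6}] ! i \<in> T)"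
    using kneser_colouring_by_stars[OF stars] by (simp add: numeral_eq_Suc)
  moreover have "\<not> kneser_colouring (T6 - {\<Delta>}) (4 - 1) c" for c
    using T6_minus_triangle_not_3_colourable[of c] unfolding assms by simp
  ultimately show "chi_KG (T6 - {\<Delta>}) = 4" by (rule chi_KG_eqI)
qed

end
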